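(* Let $n\ge1$ and let $(X_t)_{t\ge0}$ be the classical occupancy Markov chain on $\{0,\dots,n\}$: $\Pr(X_{t+1}=i\mid X_t=i)=i/n$, $\Pr(X_{t+1}=i+1\mid X_t=i)=(n-i)/n$. Then for all integers $0\le r\le k<n$ and $t\ge0$, $$\Pr(X_t\le k\mid X_0=r)=\frac{n-k}{n^t}\binom{n-r}{n-k}\sum_{j=0}^{k-r}(-1)^{k-r-j}\binom{k-r}{j}\frac{(r+j)^t}{n-r-j};$$ moreover $\Pr(X_t\le n\mid X_0=r)=1$ for all $0\le r\le n$, and $\Pr(X_t\le k\mid X_0=r)=0$ if $k<r$.
   Context: Convention $0^0=1$. *)

theory Defs
  imports Complex_Main
begin

definition occ_trans :: "nat \<Rightarrow> nat \<Rightarrow> nat \<Rightarrow> real" where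
  "occ_trans n i j =
     (if j = i then real i / real n
      else if j = Suc i then (real n - real i) / real n
      else 0)"

fun occ_dist :: "nat \<Rightarrow> nat \<Rightarrow> nat \<Rightarrow> nat \<Rightarrow> real" where
  "occ_dist n 0 r j = (if j = r then 1 else 0)"
| "occ_dist n (Suc t) r j = (\<Sum>i\<in>{0..n}. occ_dist n t r i * occ_trans n i j)"

definition occ_cdf :: "nat \<Rightarrow> nat \<Rightarrow> nat \<Rightarrow> nat \<Rightarrow> real" where
  "occ_cdf n t r k = (\<Sum>i\<in>{0..k}. occ_dist n t r i)"

end

theory Submission
  imports Defs
begin

(*
  Let F t k = Pr(X_t <= k | X_0 = r). Mass leaves {0..k} only through the transition k -> k+1, so
  F (t+1) k = (k/n) F t k + ((n-k)/n) F t (k-1) for k > 0, while F t r = (r/n)^t.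
  The claimed right-hand side is (n-k) C(n-r,n-k) n^-t (Delta^m g_t)(0), the m-th forward difference
  (m = k-r) of g_t(j) = (r+j)^t / (n-r-j). Since g_(t+1)(j) = (k + (j-m)) g_t(j) and
  (Delta^m [(j-m) h(j)])(0) = m (Delta^(m-1) h)(0), it obeys the same recurrence, and at t = 0 it
  equals 1 because (Delta^m [1/(N-j)])(0) = 1/((N-m) C(N,m)).
*)

definition forward_diff :: "nat \<Rightarrow> (nat \<Rightarrow> 'a::comm_ring_1) \<Rightarrow> 'a" where
  "forward_diff m f = (\<Sum>j\<le>m. (-1) ^ (m - j) * of_nat (m choose j) * f j)"

lemma forward_diff_diff: "forward_diff m (\<lambda>j. f j - g j) = forward_diff m f - forward_diff m g"
  unfolding forward_diff_def by (simp add: sum_subtractf algebra_simps)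

lemma forward_diff_add: "forward_diff m (\<lambda>j. f j + g j) = forward_diff m f + forward_diff m g"
  unfolding forward_diff_def by (simp add: sum.distrib algebra_simps)

lemma forward_diff_mult_left: "forward_diff m (\<lambda>j. c * f j) = c * forward_diff m f"
  unfolding forward_diff_def by (simp add: sum_distrib_left algebra_simps)

lemma forward_diff_Suc: "forward_diff (Suc m) f = forward_diff m (\<lambda>j. f (Suc j) - f j)"
proof -
  have sign: "(-1::'a) ^ (m - j) * of_nat (m choose Suc j)
      = - ((-1) ^ (m - Suc j) * of_nat (m choose Suc j))" for j
  proof (cases "j < m")
    case True
    then have "m - j = Suc (m - Suc j)" by simp
    then show ?thesis by simp
  qed (simp add: binomial_eq_0)
  have "forward_diff (Suc m) f = (-1) ^ Suc m * f 0
      + (\<Sum>j\<le>m. (-1) ^ (m - j) * of_nat (m choose j) * f (Suc j))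
      + (\<Sum>j\<le>m. (-1) ^ (m - j) * of_nat (m choose Suc j) * f (Suc j))"
    unfolding forward_diff_def sum.atMost_Suc_shift by (simp add: sum.distrib algebra_simps)
  moreover have "forward_diff m f = (\<Sum>j\<le>Suc m. (-1) ^ (m - j) * of_nat (m choose j) * f j)"
    unfolding forward_diff_def by (simp add: sum.atMost_Suc binomial_eq_0)
  then have "forward_diff m f = (-1) ^ m * f 0
      - (\<Sum>j\<le>m. (-1) ^ (m - j) * of_nat (m choose Suc j) * f (Suc j))"
    unfolding sum.atMost_Suc_shift by (simp add: sign sum_negf)
  ultimately show ?thesis
    unfolding forward_diff_diff by (simp add: forward_diff_def)
qed

lemma forward_diff_linear_weight:
  "forward_diff (Suc m) (\<lambda>j. (of_nat j - of_nat (Suc m)) * f j) = of_nat (Suc m) * forward_diff m f"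
proof -
  have term_eq: "(-1) ^ (Suc m - j) * of_nat (Suc m choose j) * ((of_nat j - of_nat (Suc m)) * f j)
      = of_nat (Suc m) * ((-1) ^ (m - j) * of_nat (m choose j) * (f j :: 'a))" if "j \<le> m" for j
  proof -
    have sub: "of_nat j - of_nat (Suc m) = - (of_nat (Suc m - j) :: 'a)"
      using that by (simp add: of_nat_diff)
    have suc: "Suc m - j = Suc (m - j)" using that by simp
    have absorb: "of_nat (Suc m - j) * of_nat (Suc m choose j) = (of_nat (Suc m) * of_nat (m choose j) :: 'a)"
      using binomial_absorb_comp[of "Suc m" j] by (metis diff_Suc_1 of_nat_mult)
    have "(-1) ^ (Suc m - j) * of_nat (Suc m choose j) * ((of_nat j - of_nat (Suc m)) * f j)
        = (-1) ^ (m - j) * (of_nat (Suc m - j) * of_nat (Suc m choose j)) * f j"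
      by (simp only: sub suc power_Suc) (simp add: algebra_simps)
    then show ?thesis unfolding absorb by (simp only: ac_simps)
  qed
  have "forward_diff (Suc m) (\<lambda>j. (of_nat j - of_nat (Suc m)) * f j)
      = (\<Sum>j\<le>m. (-1) ^ (Suc m - j) * of_nat (Suc m choose j) * ((of_nat j - of_nat (Suc m)) * f j))"
    unfolding forward_diff_def sum.atMost_Suc[of _ m] by simp
  also have "\<dots> = (\<Sum>j\<le>m. of_nat (Suc m) * ((-1) ^ (m - j) * of_nat (m choose j) * f j))"
    by (rule sum.cong[OF refl], rule term_eq) simp
  finally show ?thesis
    unfolding forward_diff_def sum_distrib_left .
qed

lemma forward_diff_linear_factor:
  "forward_diff (Suc m) (\<lambda>j. (c + (of_nat j - of_nat (Suc m))) * f j)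
     = c * forward_diff (Suc m) f + of_nat (Suc m) * forward_diff m f"
  by (simp only: distrib_right forward_diff_add forward_diff_mult_left forward_diff_linear_weight)

lemma forward_diff_inverse:
  "m < N \<Longrightarrow> forward_diff m (\<lambda>j. 1 / of_nat (N - j))
     = (1 / (of_nat (N - m) * of_nat (N choose m)) :: 'a::field_char_0)"
proof (induction m arbitrary: N)
  case 0 then show ?case by (simp add: forward_diff_def)
next
  case (Suc m)
  have "(\<lambda>j. 1 / of_nat (N - Suc j) - 1 / of_nat (N - j))
      = (\<lambda>j. 1 / of_nat (N - 1 - j) - (1 / of_nat (N - j) :: 'a))"
    by simp
  then have "forward_diff (Suc m) (\<lambda>j. 1 / of_nat (N - j) :: 'a)
      = forward_diff m (\<lambda>j. 1 / of_nat (N - 1 - j)) - forward_diff m (\<lambda>j. 1 / of_nat (N - j))"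
    by (simp only: forward_diff_Suc forward_diff_diff)
  also have "\<dots> = 1 / (of_nat (N - 1 - m) * of_nat ((N - 1) choose m))
                 - 1 / (of_nat (N - m) * of_nat (N choose m))"
    using Suc.IH[of "N - 1"] Suc.IH[of N] Suc.prems by simp
  also have "\<dots> = 1 / (of_nat (N - Suc m) * of_nat (N choose Suc m))"
  proof -
    define c :: 'a where "c = of_nat ((N - 1) choose m)"
    have "c \<noteq> 0" unfolding c_def using Suc.prems by simp
    have "(N - m) * (N choose m) = N * ((N - 1) choose m)"
      by (rule binomial_absorb_comp)
    then have h1: "of_nat (N - m) * of_nat (N choose m) = of_nat N * c"
      unfolding c_def by (metis of_nat_mult)
    have "Suc m * (N choose Suc m) = N * ((N - 1) choose m)"
      by (rule binomial_absorption)
    then have h2: "of_nat (Suc m) * of_nat (N choose Suc m) = of_nat N * c"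
      unfolding c_def by (metis of_nat_mult)
    have h3: "of_nat (N choose Suc m) = of_nat N * c / of_nat (Suc m)"
      using h2 by (simp add: eq_divide_eq mult.commute del: of_nat_Suc)
    have N: "of_nat (N - 1 - m) = (of_nat N - 1 - of_nat m :: 'a)"
      "of_nat (N - Suc m) = (of_nat N - 1 - of_nat m :: 'a)"
      using Suc.prems by (simp_all add: of_nat_diff)
    have nonzero: "of_nat (N - Suc m) \<noteq> (0::'a)" "of_nat N \<noteq> (0::'a)" "of_nat (Suc m) \<noteq> (0::'a)"
      using Suc.prems by (simp_all del: of_nat_diff of_nat_Suc)
    have telescope: "1 / (a * c) - 1 / (x * c) = 1 / (a * (x * c / y))"
      if "a \<noteq> 0" "x \<noteq> 0" "y \<noteq> 0" "y = x - a" for a x y :: 'a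
      using that \<open>c \<noteq> 0\<close> by (simp add: field_simps)
    show ?thesis unfolding h1 h3 N c_def[symmetric]
      by (rule telescope) (use nonzero[unfolded N(2)] in simp_all)
  qed
  finally show ?case .
qed

lemma occ_dist_eq_0_outside:
  assumes "r \<le> n" and "j < r \<or> n < j"
  shows "occ_dist n t r j = 0"
  using assms(2)
proof (induction t arbitrary: j)
  case 0
  then show ?case using assms(1) by auto
next
  case (Suc t)
  have "occ_dist n t r i * occ_trans n i j = 0" if i: "i \<le> n" for i
  proof (cases "j = i \<or> j = Suc i")
    case True
    then consider "j = i" | "j = Suc i" "i < r" | "i = n" "j = Suc n"
      using Suc.prems i by fastforce
    then show ?thesis
      by cases (use Suc.IH Suc.prems in \<open>auto simp: occ_trans_def\<close>)
  qed (auto simp: occ_trans_def)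
  then show ?case
    unfolding occ_dist.simps by (intro sum.neutral) simp
qed

lemma occ_dist_Suc:
  assumes "r \<le> n"
  shows "occ_dist n (Suc t) r j = occ_dist n t r j * real j / real n
    + (if j = 0 then 0 else occ_dist n t r (j - 1) * (real n - real (j - 1)) / real n)"
proof -
  let ?d = "occ_dist n t r"
  have "occ_dist n (Suc t) r j
      = (\<Sum>i\<in>{0..n}. if i = j then ?d i * real j / real n else 0)
      + (\<Sum>i\<in>{0..n}. if Suc i = j then ?d i * (real n - real i) / real n else 0)"
    unfolding occ_dist.simps sum.distrib[symmetric] by (intro sum.cong) (auto simp: occ_trans_def)
  also have "(\<Sum>i\<in>{0..n}. if i = j then ?d i * real j / real n else 0) = ?d j * real j / real n"
    using occ_dist_eq_0_outside[OF assms, of j t] by (auto simp: sum.delta)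
  also have "(\<Sum>i\<in>{0..n}. if Suc i = j then ?d i * (real n - real i) / real n else 0)
      = (if j = 0 then 0 else ?d (j - 1) * (real n - real (j - 1)) / real n)"
  proof (cases j)
    case (Suc i)
    then have "(\<Sum>i'\<in>{0..n}. if Suc i' = j then ?d i' * (real n - real i') / real n else 0)
        = (\<Sum>i'\<in>{0..n}. if i' = i then ?d i' * (real n - real i') / real n else 0)"
      by (intro sum.cong) auto
    with Suc show ?thesis
      using occ_dist_eq_0_outside[OF assms, of i t] by (auto simp: sum.delta)
  qed simp
  finally show ?thesis .
qed

lemma occ_dist_eq_occ_cdf_diff:
  "0 < k \<Longrightarrow> occ_dist n t r k = occ_cdf n t r k - occ_cdf n t r (k - 1)"
  unfolding occ_cdf_def by (cases k) auto

lemma occ_cdf_eq_0: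
  "r \<le> n \<Longrightarrow> k < r \<Longrightarrow> occ_cdf n t r k = 0"
  unfolding occ_cdf_def using occ_dist_eq_0_outside by (intro sum.neutral) auto

lemma occ_cdf_Suc:
  assumes "r \<le> n" "k \<le> n" "0 < n"
  shows "occ_cdf n (Suc t) r k = occ_cdf n t r k - (real n - real k) / real n * occ_dist n t r k"
  using assms(2)
proof (induction k)
  case 0
  have "occ_dist n (Suc t) r 0 = 0"
    using occ_dist_Suc[OF assms(1)] by simp
  then show ?case
    using assms(3) by (simp add: occ_cdf_def del: occ_dist.simps)
next
  case (Suc k)
  have cdf_Suc_index: "occ_cdf n s r (Suc k) = occ_cdf n s r k + occ_dist n s r (Suc k)" for s
    by (simp add: occ_cdf_def)
  have "occ_dist n (Suc t) r (Suc k) = occ_dist n t r (Suc k) * real (Suc k) / real n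
      + occ_dist n t r k * (real n - real k) / real n"
    using occ_dist_Suc[OF assms(1)] by (simp del: occ_dist.simps)
  moreover have "occ_dist n t r (Suc k) * real (Suc k) / real n
      = occ_dist n t r (Suc k) - (real n - real (Suc k)) / real n * occ_dist n t r (Suc k)"
    "occ_dist n t r k * (real n - real k) / real n = (real n - real k) / real n * occ_dist n t r k"
    using assms(3) by (simp_all add: field_simps)
  ultimately show ?case
    using Suc.IH[OF Suc_leD[OF Suc.prems]] cdf_Suc_index[of t] cdf_Suc_index[of "Suc t"]
    by linarith
qed

lemma occ_cdf_total:
  "r \<le> n \<Longrightarrow> 0 < n \<Longrightarrow> occ_cdf n t r n = 1"
proof (induction t)
  case 0
  then show ?case by (simp add: occ_cdf_def)
next
  case (Suc t)
  then show ?case using occ_cdf_Suc[of r n n t] by simp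
qed

lemma occ_cdf_start:
  assumes "r \<le> n" "0 < n"
  shows "occ_cdf n t r r = (real r / real n) ^ t"
proof (induction t)
  case 0
  then show ?case by (simp add: occ_cdf_def)
next
  case (Suc t)
  have "occ_dist n t r r = occ_cdf n t r r"
    using occ_dist_eq_occ_cdf_diff[of r n t r] occ_cdf_eq_0[OF assms(1), of "r - 1" t]
    by (cases "r = 0") (simp_all add: occ_cdf_def)
  then have "occ_cdf n (Suc t) r r = real r / real n * occ_cdf n t r r"
    using occ_cdf_Suc[OF assms(1) assms(1) assms(2), of t] assms(2) by (simp add: field_simps)
  with Suc show ?case by simp
qed

lemma occ_cdf_Suc_recurrence:
  assumes "r \<le> n" "0 < k" "k \<le> n"
  shows "occ_cdf n (Suc t) r k
    = real k / real n * occ_cdf n t r k + (real n - real k) / real n * occ_cdf n t r (k - 1)"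
  using occ_cdf_Suc[OF assms(1,3)] occ_dist_eq_occ_cdf_diff[OF assms(2)] assms
  by (simp add: field_simps)

definition occ_cdf_closed_form :: "nat \<Rightarrow> nat \<Rightarrow> nat \<Rightarrow> nat \<Rightarrow> real" where
  "occ_cdf_closed_form n r t k = (real (n - k) / real n ^ t) * real ((n - r) choose (n - k)) *
     (\<Sum>j=0..k - r. (-1) ^ (k - r - j) * real ((k - r) choose j) *
        real (r + j) ^ t / real (n - r - j))"

lemma occ_cdf_closed_form_eq_forward_diff:
  "occ_cdf_closed_form n r t k = real (n - k) / real n ^ t * real ((n - r) choose (n - k)) *
     forward_diff (k - r) (\<lambda>j. real (r + j) ^ t / real (n - r - j))"
  unfolding occ_cdf_closed_form_def forward_diff_def atLeast0AtMost by (simp add: times_divide_eq_right)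

lemma occ_cdf_closed_form_0:
  assumes "r \<le> k" "k < n"
  shows "occ_cdf_closed_form n r 0 k = 1"
proof -
  have "(n - r) choose (n - k) = (n - r) choose (k - r)"
    using binomial_symmetric[of "k - r" "n - r"] assms by (simp add: diff_diff_cancel)
  moreover have "forward_diff (k - r) (\<lambda>j. 1 / real (n - r - j))
      = 1 / (real (n - k) * real ((n - r) choose (k - r)))"
    using forward_diff_inverse[where 'a = real, of "k - r" "n - r"] assms by simp
  ultimately show ?thesis
    using assms by (simp add: occ_cdf_closed_form_eq_forward_diff)
qed

lemma occ_cdf_closed_form_start:
  "r < n \<Longrightarrow> occ_cdf_closed_form n r t r = (real r / real n) ^ t"
  unfolding occ_cdf_closed_form_def by (simp add: power_divide)

lemma occ_cdf_closed_form_Suc: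
  assumes "r < k" "k < n"
  shows "occ_cdf_closed_form n r (Suc t) k = real k / real n * occ_cdf_closed_form n r t k
    + (real n - real k) / real n * occ_cdf_closed_form n r t (k - 1)"
proof -
  obtain p where p: "k - r = Suc p" "k - 1 - r = p"
    using assms by (metis Suc_diff_Suc diff_Suc_1 diff_commute zero_less_diff)
  define g where "g j = real (r + j) ^ t / real (n - r - j)" for j
  have n_minus: "n - (k - 1) = Suc (n - k)" "n - r = Suc (n - k + p)"
    using assms p by auto
  define X where "X = real ((n - r) choose (n - k))"
  define Y where "Y = real ((n - r) choose Suc (n - k))"
  have "Suc (n - k) * ((n - r) choose Suc (n - k)) = Suc p * ((n - r) choose (n - k))"
    unfolding n_minus(2) by (rule Suc_times_binomial_add)
  then have XY: "real (Suc p) * X = real (Suc (n - k)) * Y"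
    unfolding X_def Y_def by (metis of_nat_mult)
  have "k = r + Suc p"
    using assms p by simp
  then have "real (r + j) ^ Suc t / real (n - r - j) = (real k + (real j - real (Suc p))) * g j" for j
    unfolding g_def by simp
  then have "occ_cdf_closed_form n r (Suc t) k
      = real (n - k) / real n ^ Suc t * X * (real k * forward_diff (Suc p) g + real (Suc p) * forward_diff p g)"
    unfolding occ_cdf_closed_form_eq_forward_diff p X_def forward_diff_linear_factor[symmetric] by simp
  also have "\<dots> = real k / real n * (real (n - k) / real n ^ t * X * forward_diff (Suc p) g)
      + real (n - k) / real n * (real (Suc p) * X / real n ^ t * forward_diff p g)"
    using assms by (simp add: field_simps)
  also have "real (Suc p) * X / real n ^ t * forward_diff p g = occ_cdf_closed_form n r t (k - 1)"
    unfolding XY occ_cdf_closed_form_eq_forward_diff p n_minus(1) Y_def g_def by simp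
  also have "real (n - k) / real n ^ t * X * forward_diff (Suc p) g = occ_cdf_closed_form n r t k"
    unfolding occ_cdf_closed_form_eq_forward_diff p X_def g_def ..
  finally show ?thesis
    using assms by (simp add: of_nat_diff)
qed

lemma occ_cdf_eq_closed_form:
  "r \<le> k \<Longrightarrow> k < n \<Longrightarrow> occ_cdf n t r k = occ_cdf_closed_form n r t k"
proof (induction t arbitrary: k)
  case 0
  then show ?case by (simp add: occ_cdf_def occ_cdf_closed_form_0)
next
  case (Suc t)
  show ?case
  proof (cases "k = r")
    case True
    with Suc.prems show ?thesis
      by (simp add: occ_cdf_start occ_cdf_closed_form_start)
  next
    case False
    with Suc.prems have "r < k" by simp
    with Suc show ?thesis
      by (simp add: occ_cdf_Suc_recurrence occ_cdf_closed_form_Suc)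
  qed
qed

theorem mainTheorem14:
  fixes n :: nat
  assumes "n \<ge> 1"
  shows "(\<forall>r k t. r \<le> k \<and> k < n \<longrightarrow>
            occ_cdf n t r k =
              (real (n - k) / real n ^ t) * real ((n - r) choose (n - k)) *
              (\<Sum>j=0..k - r. (-1) ^ (k - r - j) * real ((k - r) choose j) *
                   real (r + j) ^ t / real (n - r - j)))
       \<and> (\<forall>r t. r \<le> n \<longrightarrow> occ_cdf n t r n = 1)
       \<and> (\<forall>r k t. r \<le> n \<and> k < r \<longrightarrow> occ_cdf n t r k = 0)"
  using occ_cdf_eq_closed_form[unfolded occ_cdf_closed_form_def] occ_cdf_total occ_cdf_eq_0 assms
  by auto

end
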